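(* Let $(X,\mathscr{R})$ be a closed mixed reaction network with $\mathscr{R}=\mathscr{R}_{\mathrm{rev}}\sqcup\mathscr{R}_{\mathrm{irr}}$ and stoichiometric matrix $S$. Then $(X,\mathscr{R})$ is thermodynamically sound if and only if there is no irreversible futile cycle.
   Context: A reaction network (RN) $(X,\mathscr{R})$ consists of a finite non-empty set $X$ of species and a finite non-empty set $\mathscr{R}$ of reactions. Each reaction $r$ is given by stoichiometric coefficients $s^-_{xr},s^+_{xr}\in\mathbb{N}_0$ ($x\in X$), written $\sum_x s^-_{xr}x\to\sum_x s^+_{xr}x$. The stoichiometric matrix $S\in\mathbb{Z}^{X\times\mathscr{R}}$ has entries $S_{xr}=s^+_{xr}-s^-_{xr}$. A reaction $r$ is proper if there are $x,y\in X$ with $S_{xr}<0<S_{yr}$, and the RN is closed if all its reactions are proper. The reverse $\bar r$ of a reaction $r$ has $s^-_{x\bar r}=s^+_{xr}$ and $s^+_{x\bar r}=s^-_{xr}$ for all $x$. A mixed RN has $\mathscr{R}=\mathscr{R}_{\mathrm{rev}}\sqcup\mathscr{R}_{\mathrm{irr}}$, where $r\in\mathscr{R}_{\mathrm{rev}}$ implies $\bar r\in\mathscr{R}_{\mathrm{rev}}$, and $r\in\mathscr{R}_{\mathrm{irr}}$ implies $\bar r\notin\mathscr{R}$. Vector notation for $v\in\mathbb{R}^{\mathscr{R}}$: - $v\ge0$ means all entries are non-negative. - $v>0$ means $v\ge 0$ and $v\ne0$. - $v\gg0$ means all entries are positive. A futile cycle is a vector $v>0$ with $Sv=0$. An irreversible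 futile cycle is a futile cycle with $\operatorname{supp}(v)\subseteq\mathscr{R}_{\mathrm{irr}}$. A vector of reaction energies is any $g\in\mathbb{R}^{\mathscr{R}}$. The triple $(X,\mathscr{R},g)$ is thermodynamic if $Sv=0$ implies $\langle g,v\rangle=0$ for all $v\in\mathbb{R}^{\mathscr{R}}$, i.e. $g\in(\ker S)^\perp$. The mixed RN is thermodynamically sound if there is $g$ such that $(X,\mathscr{R},g)$ is thermodynamic and $g_r<0$ for all $r\in\mathscr{R}_{\mathrm{irr}}$. *)

theory Defs
  imports Complex_Main
begin

text \<open>A reaction is identified with its pair of stoichiometric coefficient vectors
  (reactant coefficients s^-, product coefficients s^+).\<close>
type_synonym 'x reaction = "('x \<Rightarrow> nat) \<times> ('x \<Rightarrow> nat)"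

definition reactant_coeff :: "'x reaction \<Rightarrow> 'x \<Rightarrow> nat" where
  "reactant_coeff r x = fst r x"

definition product_coeff :: "'x reaction \<Rightarrow> 'x \<Rightarrow> nat" where
  "product_coeff r x = snd r x"

definition rev_reaction :: "'x reaction \<Rightarrow> 'x reaction" where
  "rev_reaction r = (snd r, fst r)"

definition stoich :: "'x \<Rightarrow> 'x reaction \<Rightarrow> int" where
  "stoich x r = int (product_coeff r x) - int (reactant_coeff r x)"

definition reaction_network :: "'x set \<Rightarrow> 'x reaction set \<Rightarrow> bool" where
  "reaction_network X R \<longleftrightarrow> finite X \<and> X \<noteq> {} \<and> finite R \<and> R \<noteq> {} \<and>
     (\<forall>r\<in>R. \<forall>x. x \<notin> X \<longrightarrow> reactant_coeff r x = 0 \<and> product_coeff r x = 0)"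

definition proper :: "'x set \<Rightarrow> 'x reaction \<Rightarrow> bool" where
  "proper X r \<longleftrightarrow> (\<exists>x\<in>X. \<exists>y\<in>X. stoich x r < 0 \<and> 0 < stoich y r)"

definition closed_RN :: "'x set \<Rightarrow> 'x reaction set \<Rightarrow> bool" where
  "closed_RN X R \<longleftrightarrow> (\<forall>r\<in>R. proper X r)"

definition mixed_RN :: "'x set \<Rightarrow> 'x reaction set \<Rightarrow> 'x reaction set \<Rightarrow> 'x reaction set \<Rightarrow> bool" where
  "mixed_RN X R Rrev Rirr \<longleftrightarrow> reaction_network X R \<and>
     R = Rrev \<union> Rirr \<and> Rrev \<inter> Rirr = {} \<and>
     (\<forall>r\<in>Rrev. rev_reaction r \<in> Rrev) \<and>
     (\<forall>r\<in>Rirr. rev_reaction r \<notin> R)"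

definition stoich_kernel :: "'x set \<Rightarrow> 'x reaction set \<Rightarrow> ('x reaction \<Rightarrow> real) \<Rightarrow> bool" where
  "stoich_kernel X R v \<longleftrightarrow> (\<forall>x\<in>X. (\<Sum>r\<in>R. real_of_int (stoich x r) * v r) = 0)"

definition futile_cycle :: "'x set \<Rightarrow> 'x reaction set \<Rightarrow> ('x reaction \<Rightarrow> real) \<Rightarrow> bool" where
  "futile_cycle X R v \<longleftrightarrow> (\<forall>r\<in>R. 0 \<le> v r) \<and> (\<exists>r\<in>R. v r \<noteq> 0) \<and> stoich_kernel X R v"

definition irreversible_futile_cycle ::
  "'x set \<Rightarrow> 'x reaction set \<Rightarrow> 'x reaction set \<Rightarrow> ('x reaction \<Rightarrow> real) \<Rightarrow> bool" where
  "irreversible_futile_cycle X R Rirr v \<longleftrightarrow> futile_cycle X R v \<and> (\<forall>r\<in>R. v r \<noteq> 0 \<longrightarrow> r \<in> Rirr)"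

definition thermodynamic :: "'x set \<Rightarrow> 'x reaction set \<Rightarrow> ('x reaction \<Rightarrow> real) \<Rightarrow> bool" where
  "thermodynamic X R g \<longleftrightarrow> (\<forall>v. stoich_kernel X R v \<longrightarrow> (\<Sum>r\<in>R. g r * v r) = 0)"

definition thermodynamically_sound :: "'x set \<Rightarrow> 'x reaction set \<Rightarrow> 'x reaction set \<Rightarrow> bool" where
  "thermodynamically_sound X R Rirr \<longleftrightarrow> (\<exists>g. thermodynamic X R g \<and> (\<forall>r\<in>Rirr. g r < 0))"

end

theory Submission
  imports Defs
begin

(* By Gordan's alternative for the columns S_r (r irreversible), either some y satisfies
   y . S_r < 0 for every irreversible r, or a nonnegative, nonzero combination of these columns
   vanishes. In the first case g = S^T y lies in the row space of S, i.e. in (ker S)^perp, and is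
   negative on the irreversible reactions; in the second case the coefficients form an
   irreversible futile cycle. Both cannot happen, since <g, v> = 0 for a thermodynamic g and a
   futile cycle v, while <g, v> < 0 if v is irreversible and g is negative on irreversible
   reactions. *)

definition dot_on :: "'x set \<Rightarrow> ('x \<Rightarrow> real) \<Rightarrow> ('x \<Rightarrow> real) \<Rightarrow> real" where
  "dot_on X u v = (\<Sum>x\<in>X. u x * v x)"

lemma dot_on_diff_left [simp]: "dot_on X (\<lambda>x. u x - w x) v = dot_on X u v - dot_on X w v"
  by (simp add: dot_on_def sum_subtractf left_diff_distrib)

lemma dot_on_diff_right [simp]: "dot_on X u (\<lambda>x. v x - w x) = dot_on X u v - dot_on X u w"
  by (simp add: dot_on_def sum_subtractf right_diff_distrib)

lemma dot_on_scale_left [simp]: "dot_on X (\<lambda>x. c * u x) v = c * dot_on X u v"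
  by (simp add: dot_on_def sum_distrib_left mult.assoc)

lemma dot_on_scale_right [simp]: "dot_on X u (\<lambda>x. c * v x) = c * dot_on X u v"
  by (simp add: dot_on_def sum_distrib_left algebra_simps)

lemma dot_on_self_pos:
  assumes "finite X" and "x \<in> X" and "v x \<noteq> 0"
  shows "0 < dot_on X v v"
  unfolding dot_on_def using assms
  by (intro sum_pos2) (auto simp: not_square_less_zero zero_less_mult_iff)

lemma ex_large_scale_neg:
  fixes f g :: "'i \<Rightarrow> real"
  assumes "finite I" and "\<forall>r\<in>I. f r < 0"
  shows "\<exists>t. \<forall>r\<in>I. t * f r + g r < 0"
proof -
  have "\<forall>r\<in>I. eventually (\<lambda>t. t * f r + g r < 0) at_top"
  proof
    fix r assume "r \<in> I"
    then have f: "f r < 0" using assms(2) by blast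
    have "t * f r + g r < 0" if "t \<ge> - g r / f r + 1" for t
    proof -
      have "t * f r \<le> (- g r / f r + 1) * f r"
        using that f by (simp add: mult_right_mono_neg)
      also have "\<dots> = f r - g r"
        using f by (simp add: field_simps)
      finally show ?thesis using f by simp
    qed
    then show "eventually (\<lambda>t. t * f r + g r < 0) at_top"
      by (auto simp: eventually_at_top_linorder)
  qed
  then have "eventually (\<lambda>t. \<forall>r\<in>I. t * f r + g r < 0) at_top"
    using assms(1) by (rule eventually_ball_finite[rotated])
  then show ?thesis
    by (auto dest: eventually_happens)
qed

definition nonneg_dependent :: "'x set \<Rightarrow> 'i set \<Rightarrow> ('i \<Rightarrow> 'x \<Rightarrow> real) \<Rightarrow> bool" where
  "nonneg_dependent X I a \<longleftrightarrow>
     (\<exists>l. (\<forall>r\<in>I. 0 \<le> l r) \<and> (\<exists>r\<in>I. l r \<noteq> 0) \<and> (\<forall>x\<in>X. (\<Sum>r\<in>I. l r * a r x) = 0))"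

lemma nonneg_dependent_insert_if_zero:
  assumes "\<forall>x\<in>X. a s x = 0" and "finite I"
  shows "nonneg_dependent X (insert s I) a"
  unfolding nonneg_dependent_def
  using assms by (intro exI[of _ "\<lambda>r. of_bool (r = s)"]) (auto simp: sum_of_bool_mult_eq)

lemma nonneg_dependent_insert:
  assumes "nonneg_dependent X I a" and "finite I" and "s \<notin> I"
  shows "nonneg_dependent X (insert s I) a"
proof -
  obtain l where l: "\<forall>r\<in>I. 0 \<le> l r" "\<exists>r\<in>I. l r \<noteq> 0" "\<forall>x\<in>X. (\<Sum>r\<in>I. l r * a r x) = 0"
    using assms(1) by (auto simp: nonneg_dependent_def)
  have "(\<Sum>r\<in>insert s I. (l(s := 0)) r * a r x) = (\<Sum>r\<in>I. l r * a r x)" for x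
    using assms(2,3) by (auto intro: sum.cong)
  then show ?thesis
    unfolding nonneg_dependent_def using l assms(3)
    by (intro exI[of _ "l(s := 0)"]) fastforce
qed

lemma nonneg_dependent_insert_from_projection:
  assumes "finite I" and "s \<notin> I" and "0 \<le> \<alpha>"
    and y: "\<forall>r\<in>I. dot_on X y (a r) < 0"
    and "nonneg_dependent X I (\<lambda>r x. \<alpha> * a r x - dot_on X y (a r) * a s x)"
  shows "nonneg_dependent X (insert s I) a"
proof -
  obtain l where l: "\<forall>r\<in>I. 0 \<le> l r" "\<exists>r\<in>I. l r \<noteq> 0"
    and comb: "\<forall>x\<in>X. (\<Sum>r\<in>I. l r * (\<alpha> * a r x - dot_on X y (a r) * a s x)) = 0"
    using assms(5) by (auto simp: nonneg_dependent_def)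
  define c where "c = (\<Sum>r\<in>I. l r * - dot_on X y (a r))"
  have "0 < c"
  proof -
    obtain r' where "r' \<in> I" "l r' \<noteq> 0" using l(2) by blast
    then show ?thesis
      unfolding c_def using l(1) y
      by (intro sum_pos2[OF assms(1)])
        (auto simp: mult_pos_neg mult_nonneg_nonpos order_le_neq_trans less_imp_le)
  qed
  define l' where "l' = (\<lambda>r. \<alpha> * l r)(s := c)"
  have "(\<Sum>r\<in>insert s I. l' r * a r x) = (\<Sum>r\<in>I. l r * (\<alpha> * a r x - dot_on X y (a r) * a s x))" for x
  proof -
    have "(\<Sum>r\<in>insert s I. l' r * a r x) = c * a s x + (\<Sum>r\<in>I. \<alpha> * l r * a r x)"
      using assms(1,2) by (auto simp: l'_def intro: sum.cong)
    also have "\<dots> = (\<Sum>r\<in>I. l r * (\<alpha> * a r x - dot_on X y (a r) * a s x))"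
      by (simp add: c_def sum_subtractf sum_negf sum_distrib_left algebra_simps)
    finally show ?thesis .
  qed
  then show ?thesis
    unfolding nonneg_dependent_def using l(1) comb assms(3) \<open>0 < c\<close>
    by (intro exI[of _ l']) (auto simp: l'_def)
qed

lemma ex_neg_direction_insert_from_projection:
  assumes "finite I" and u: "0 < dot_on X u (a s)" and \<alpha>: "\<alpha> = dot_on X y (a s)"
    and z: "\<forall>r\<in>I. dot_on X z (\<lambda>x. \<alpha> * a r x - dot_on X y (a r) * a s x) < 0"
  shows "\<exists>w. \<forall>r\<in>insert s I. dot_on X w (a r) < 0"
proof -
  define w0 where "w0 = (\<lambda>x. \<alpha> * z x - dot_on X z (a s) * y x)"
  have w0: "dot_on X w0 (a r) = dot_on X z (\<lambda>x. \<alpha> * a r x - dot_on X y (a r) * a s x)" for r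
    by (simp add: w0_def)
  have "dot_on X w0 (a s) = 0"
    using w0[of s] by (simp add: \<alpha> dot_on_def)
  have "\<forall>r\<in>I. dot_on X w0 (a r) < 0"
    using w0 z by simp
  from ex_large_scale_neg[OF assms(1) this, of "\<lambda>r. - dot_on X u (a r)"]
  obtain t where t: "\<forall>r\<in>I. t * dot_on X w0 (a r) + - dot_on X u (a r) < 0" ..
  have "\<forall>r\<in>insert s I. dot_on X (\<lambda>x. t * w0 x - u x) (a r) < 0"
    using t u \<open>dot_on X w0 (a s) = 0\<close> by auto
  then show ?thesis by blast
qed

lemma gordan_alternative:
  fixes a :: "'i \<Rightarrow> 'x \<Rightarrow> real"
  assumes "finite X" and "finite I"
  shows "(\<exists>y. \<forall>r\<in>I. dot_on X y (a r) < 0) \<or> nonneg_dependent X I a"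
  using assms(2)
proof (induction I arbitrary: a rule: finite_induct)
  case empty
  then show ?case by simp
next
  case (insert s I)
  show ?case
  proof (cases "\<forall>x\<in>X. a s x = 0")
    case True
    then show ?thesis
      using insert.hyps(1) by (simp add: nonneg_dependent_insert_if_zero)
  next
    case False
    then obtain x where "x \<in> X" "a s x \<noteq> 0" by blast
    then have a_s: "0 < dot_on X (a s) (a s)"
      using assms(1) by (intro dot_on_self_pos)
    consider (dependent) "nonneg_dependent X I a"
      | (direction) y where "\<forall>r\<in>I. dot_on X y (a r) < 0"
      using insert.IH[of a] by blast
    then show ?thesis
    proof cases
      case dependent
      with insert.hyps show ?thesis
        by (intro disjI2 nonneg_dependent_insert)
    next
      case (direction y)
      define \<alpha> where "\<alpha> = dot_on X y (a s)"
      show ?thesis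
      proof (cases "\<alpha> < 0")
        case True
        then show ?thesis
          using direction unfolding \<alpha>_def by (intro disjI1 exI[of _ y]) simp
      next
        case False
        then have "0 \<le> \<alpha>" by simp
        \<comment> \<open>y annihilates each \<open>b r = \<alpha> a r - (y \<cdot> a r) a s\<close>,
          a nonnegative combination of \<open>a r\<close> and \<open>a s\<close>\<close>
        from insert.IH[of "\<lambda>r x. \<alpha> * a r x - dot_on X y (a r) * a s x"]
        show ?thesis
        proof
          assume "\<exists>z. \<forall>r\<in>I. dot_on X z (\<lambda>x. \<alpha> * a r x - dot_on X y (a r) * a s x) < 0"
          then obtain z where "\<forall>r\<in>I. dot_on X z (\<lambda>x. \<alpha> * a r x - dot_on X y (a r) * a s x) < 0" ..
          with ex_neg_direction_insert_from_projection
              [where a = a and s = s, OF insert.hyps(1) a_s \<alpha>_def]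
          show ?thesis by (intro disjI1)
        next
          assume "nonneg_dependent X I (\<lambda>r x. \<alpha> * a r x - dot_on X y (a r) * a s x)"
          with nonneg_dependent_insert_from_projection
              [where a = a and s = s, OF insert.hyps \<open>0 \<le> \<alpha>\<close> direction]
          show ?thesis by (intro disjI2)
        qed
      qed
    qed
  qed
qed

lemma no_irreversible_futile_cycle_if_sound:
  assumes "finite R" and "thermodynamically_sound X R Rirr"
  shows "\<not> (\<exists>v. irreversible_futile_cycle X R Rirr v)"
proof
  assume "\<exists>v. irreversible_futile_cycle X R Rirr v"
  then obtain v where v_nonneg: "\<forall>r\<in>R. 0 \<le> v r" and v_nonzero: "\<exists>r\<in>R. v r \<noteq> 0"
    and v_kernel: "stoich_kernel X R v" and v_supp: "\<forall>r\<in>R. v r \<noteq> 0 \<longrightarrow> r \<in> Rirr"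
    by (auto simp: irreversible_futile_cycle_def futile_cycle_def)
  obtain g where "thermodynamic X R g" and g_neg: "\<forall>r\<in>Rirr. g r < 0"
    using assms(2) by (auto simp: thermodynamically_sound_def)
  then have "(\<Sum>r\<in>R. g r * v r) = 0"
    using v_kernel by (simp add: thermodynamic_def)
  moreover have "(\<Sum>r\<in>R. g r * v r) < 0"
  proof -
    have neg: "g r * v r < 0" if "r \<in> R" "v r \<noteq> 0" for r
      using that v_nonneg v_supp g_neg by (simp add: mult_neg_pos order_le_neq_trans)
    have "g r * v r \<le> 0" if "r \<in> R" for r
      using neg[OF that] by (cases "v r = 0") (simp_all add: less_imp_le)
    then have "(\<Sum>r\<in>R. g r * v r) < (\<Sum>r\<in>R. 0)"
      using neg v_nonzero by (intro sum_strict_mono_ex1[OF assms(1)]) blast+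
    then show ?thesis by simp
  qed
  ultimately show False by simp
qed

lemma thermodynamic_stoich_transpose:
  "thermodynamic X R (\<lambda>r. dot_on X y (\<lambda>x. real_of_int (stoich x r)))"
  unfolding thermodynamic_def
proof (intro allI impI)
  fix v assume "stoich_kernel X R v"
  then have "(\<Sum>x\<in>X. y x * (\<Sum>r\<in>R. real_of_int (stoich x r) * v r)) = 0"
    by (simp add: stoich_kernel_def)
  then show "(\<Sum>r\<in>R. dot_on X y (\<lambda>x. real_of_int (stoich x r)) * v r) = 0"
    by (simp add: dot_on_def sum_distrib_left sum_distrib_right mult.assoc sum.swap[of _ R])
qed

lemma irreversible_futile_cycle_if_nonneg_dependent:
  assumes "finite R" and "Rirr \<subseteq> R"
    and "nonneg_dependent X Rirr (\<lambda>r x. real_of_int (stoich x r))"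
  shows "\<exists>v. irreversible_futile_cycle X R Rirr v"
proof -
  obtain l where l: "\<forall>r\<in>Rirr. 0 \<le> l r" "\<exists>r\<in>Rirr. l r \<noteq> 0"
    and comb: "\<forall>x\<in>X. (\<Sum>r\<in>Rirr. l r * real_of_int (stoich x r)) = 0"
    using assms(3) by (auto simp: nonneg_dependent_def)
  define v where "v r = (if r \<in> Rirr then l r else 0)" for r
  have "(\<Sum>r\<in>R. real_of_int (stoich x r) * v r) = (\<Sum>r\<in>Rirr. l r * real_of_int (stoich x r))" for x
  proof -
    have "(\<Sum>r\<in>R. real_of_int (stoich x r) * v r) = (\<Sum>r\<in>Rirr. real_of_int (stoich x r) * v r)"
      by (rule sum.mono_neutral_right[OF assms(1,2)]) (auto simp: v_def)
    also have "\<dots> = (\<Sum>r\<in>Rirr. l r * real_of_int (stoich x r))"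
      by (rule sum.cong) (simp_all add: v_def)
    finally show ?thesis .
  qed
  then have "irreversible_futile_cycle X R Rirr v"
    using l comb assms(2)
    by (auto simp: irreversible_futile_cycle_def futile_cycle_def stoich_kernel_def v_def)
  then show ?thesis by blast
qed

lemma sound_if_no_irreversible_futile_cycle:
  assumes "finite X" and "finite R" and "Rirr \<subseteq> R"
    and "\<not> (\<exists>v. irreversible_futile_cycle X R Rirr v)"
  shows "thermodynamically_sound X R Rirr"
proof -
  let ?S = "\<lambda>r x. real_of_int (stoich x r)"
  have "finite Rirr"
    using assms(2,3) by (rule finite_subset[rotated])
  moreover have "\<not> nonneg_dependent X Rirr ?S"
    using irreversible_futile_cycle_if_nonneg_dependent[OF assms(2,3)] assms(4) by blast
  ultimately have "\<exists>y. \<forall>r\<in>Rirr. dot_on X y (?S r) < 0"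
    using gordan_alternative[OF assms(1), of Rirr ?S] by blast
  then show ?thesis
    unfolding thermodynamically_sound_def using thermodynamic_stoich_transpose by blast
qed

theorem theorem2:
  fixes X :: "'x set" and R Rrev Rirr :: "'x reaction set"
  assumes "mixed_RN X R Rrev Rirr"
    and "closed_RN X R"
  shows "thermodynamically_sound X R Rirr \<longleftrightarrow> \<not> (\<exists>v. irreversible_futile_cycle X R Rirr v)"
proof -
  have X: "finite X" and R: "finite R" and Rirr: "Rirr \<subseteq> R"
    using assms(1) by (auto simp: mixed_RN_def reaction_network_def)
  show ?thesis
    using no_irreversible_futile_cycle_if_sound[OF R] sound_if_no_irreversible_futile_cycle[OF X R Rirr]
    by blast
qed

end
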